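(* Let $\theta_1,\dots,\theta_m$ be i.i.d. random variables uniformly distributed on $[0,1]$. If $m\ge 20$, then $$\mathbb{E}\left[\min_{j\in[m]}\left(\tfrac14-\theta_j\right)^2\right]\le \frac{1.01}{2(m+1)(m+2)}.$$ *)

theory Defs
  imports "HOL-Probability.Probability"
begin

end

theory Submission
  imports Defs
begin

(* With Y the minimum, E Y = int_0^oo 2s P(Y >= s^2) ds, and Y >= s^2 means that every theta_j
   is at distance at least s from 1/4.  For one uniform variable this has probability at most
   1 - 2s for s <= 1/4 and at most 1/2 for s <= 3/4, so by independence
   E Y <= int_0^(1/2) 2s (1 - 2s)^m ds + int_(1/4)^(3/4) 2s 2^-m ds = 1/(2(m+1)(m+2)) + 2^-m/2,
   and the last term is below 1% of the first once m >= 20. *)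

lemma has_integral_two_mult_id:
  fixes a b :: real
  assumes "a \<le> b"
  shows "((\<lambda>s. 2 * s) has_integral b\<^sup>2 - a\<^sup>2) {a..b}"
  using assms
  by (intro fundamental_theorem_of_calculus)
     (auto simp: has_real_derivative_iff_has_vector_derivative[symmetric] intro!: derivative_eq_intros)

lemma emeasure_unit_interval_far_from_le:
  fixes c s :: real
  assumes "0 \<le> s"
  shows "emeasure lborel ({0..1} \<inter> {x. s \<le> \<bar>c - x\<bar>}) \<le> ennreal (max 0 (c - s) + max 0 (1 - c - s))"
proof -
  have "emeasure lborel ({0..1} \<inter> {x. s \<le> \<bar>c - x\<bar>}) \<le> emeasure lborel ({0..c - s} \<union> {c + s..1})"
    using assms by (intro emeasure_mono) auto
  also have "\<dots> \<le> emeasure lborel {0..c - s} + emeasure lborel {c + s..1}"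
    by (rule emeasure_subadditive) auto
  also have "\<dots> = ennreal (max 0 (c - s)) + ennreal (max 0 (1 - c - s))"
    by (simp add: emeasure_lborel_Icc_eq max_def)
  also have "\<dots> = ennreal (max 0 (c - s) + max 0 (1 - c - s))"
    by (rule ennreal_plus[symmetric]) simp_all
  finally show ?thesis .
qed

lemma (in prob_space) prob_uniform_far_from_le:
  fixes c s :: real
  assumes X: "distributed M lborel X (indicator {0..1})" and "0 \<le> s"
  shows "prob (X -` {x. s \<le> \<bar>c - x\<bar>} \<inter> space M) \<le> max 0 (c - s) + max 0 (1 - c - s)"
proof -
  have A: "{x. s \<le> \<bar>c - x\<bar>} \<in> sets lborel" by measurable
  have "emeasure M (X -` {x. s \<le> \<bar>c - x\<bar>} \<inter> space M)
      = (\<integral>\<^sup>+x. indicator {0..1} x * indicator {x. s \<le> \<bar>c - x\<bar>} x \<partial>lborel)"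
    by (rule distributed_emeasure[OF X A])
  also have "\<dots> = emeasure lborel ({0..1} \<inter> {x. s \<le> \<bar>c - x\<bar>})"
    using A by (simp add: indicator_inter_arith[symmetric])
  also have "\<dots> \<le> ennreal (max 0 (c - s) + max 0 (1 - c - s))"
    by (rule emeasure_unit_interval_far_from_le[OF assms(2)])
  finally show ?thesis
    by (simp only: emeasure_eq_measure ennreal_le_iff[OF add_nonneg_nonneg[OF max.cobounded1 max.cobounded1]])
qed

lemma (in prob_space) prob_all_in_le_power:
  assumes ind: "indep_vars (\<lambda>_. N) X J" and J: "finite J" and A: "A \<in> sets N"
    and p: "\<And>j. j \<in> J \<Longrightarrow> prob (X j -` A \<inter> space M) \<le> p"
  shows "prob {\<omega>\<in>space M. \<forall>j\<in>J. X j \<omega> \<in> A} \<le> p ^ card J"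
proof (cases "J = {}")
  case False
  have "{\<omega>\<in>space M. \<forall>j\<in>J. X j \<omega> \<in> A} = (\<Inter>j\<in>J. X j -` A \<inter> space M)"
    using False by auto
  then have "prob {\<omega>\<in>space M. \<forall>j\<in>J. X j \<omega> \<in> A} = (\<Prod>j\<in>J. prob (X j -` A \<inter> space M))"
    using indep_varsD_finite[OF ind False J] A by simp
  also have "\<dots> \<le> (\<Prod>j\<in>J. p)"
    by (intro prod_mono) (simp add: p)
  finally show ?thesis by simp
qed simp

lemma nn_integral_eq_nn_integral_sq_tail:
  assumes "sigma_finite_measure M" and Y: "Y \<in> borel_measurable M"
    and Y_nonneg: "\<And>\<omega>. \<omega> \<in> space M \<Longrightarrow> 0 \<le> Y \<omega>"
  shows "(\<integral>\<^sup>+\<omega>. ennreal (Y \<omega>) \<partial>M)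
    = (\<integral>\<^sup>+s\<in>{0..}. ennreal (2 * s) * emeasure M {\<omega>\<in>space M. s\<^sup>2 \<le> Y \<omega>} \<partial>lborel)"
proof -
  interpret pair_sigma_finite M lborel
    by (intro pair_sigma_finite.intro assms(1) lborel.sigma_finite_measure_axioms)
  define F where "F \<omega> s = ennreal (2 * s) * indicator {0..} s * indicator {\<omega>\<in>space M. s\<^sup>2 \<le> Y \<omega>} \<omega>"
    for \<omega> and s :: real
  have F_measurable: "case_prod F \<in> borel_measurable (M \<Otimes>\<^sub>M lborel)"
    unfolding F_def using Y by measurable
  have "ennreal (Y \<omega>) = (\<integral>\<^sup>+s. F \<omega> s \<partial>lborel)" if \<omega>: "\<omega> \<in> space M" for \<omega>
  proof -
    have "F \<omega> s = ennreal (2 * s) * indicator {0..sqrt (Y \<omega>)} s" for s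
      using \<omega> Y_nonneg[OF \<omega>] real_le_rsqrt real_sqrt_le_iff[of "s\<^sup>2" "Y \<omega>"]
      by (auto simp: F_def indicator_def)
    moreover have "(\<integral>\<^sup>+s. ennreal (2 * s) * indicator {0..sqrt (Y \<omega>)} s \<partial>lborel) = ennreal (Y \<omega>)"
      using has_integral_two_mult_id[of 0 "sqrt (Y \<omega>)"] Y_nonneg[OF \<omega>]
      by (subst nn_integral_has_integral_lebesgue') auto
    ultimately show ?thesis by simp
  qed
  then have "(\<integral>\<^sup>+\<omega>. ennreal (Y \<omega>) \<partial>M) = (\<integral>\<^sup>+\<omega>. (\<integral>\<^sup>+s. F \<omega> s \<partial>lborel) \<partial>M)"
    by (intro nn_integral_cong) simp
  also have "\<dots> = (\<integral>\<^sup>+s. (\<integral>\<^sup>+\<omega>. F \<omega> s \<partial>M) \<partial>lborel)"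
    by (rule Fubini'[OF F_measurable, symmetric])
  also have "\<dots> = (\<integral>\<^sup>+s\<in>{0..}. ennreal (2 * s) * emeasure M {\<omega>\<in>space M. s\<^sup>2 \<le> Y \<omega>} \<partial>lborel)"
  proof (intro nn_integral_cong)
    fix s :: real
    have "{\<omega>\<in>space M. s\<^sup>2 \<le> Y \<omega>} \<in> sets M"
      using Y by measurable
    from nn_integral_cmult_indicator[OF this, of "ennreal (2 * s) * indicator {0..} s"]
    show "(\<integral>\<^sup>+\<omega>. F \<omega> s \<partial>M)
      = ennreal (2 * s) * emeasure M {\<omega>\<in>space M. s\<^sup>2 \<le> Y \<omega>} * indicator {0..} s"
      unfolding F_def by (simp add: mult_ac)
  qed
  finally show ?thesis .
qed

(* On (1/4, 3/4] the exact tail is 3/4 - s; the cruder 1/2 keeps its m-th power trivial to integrate. *)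
definition quarter_tail :: "real \<Rightarrow> real" where
  "quarter_tail s = (if s \<le> 1/4 then 1 - 2 * s else if s \<le> 3/4 then 1/2 else 0)"

lemma quarter_tail_nonneg: "0 \<le> quarter_tail s"
  by (simp add: quarter_tail_def)

lemma (in prob_space) prob_min_sq_dist_quarter_ge_le:
  assumes ind: "indep_vars (\<lambda>_. borel) \<theta> J" and J: "finite J" "J \<noteq> {}"
    and uniform: "\<And>j. j \<in> J \<Longrightarrow> distributed M lborel (\<theta> j) (indicator {0..1})"
    and s: "0 \<le> s"
  shows "prob {\<omega>\<in>space M. s\<^sup>2 \<le> Min ((\<lambda>j. (1/4 - \<theta> j \<omega>)\<^sup>2) ` J)} \<le> quarter_tail s ^ card J"
proof -
  have "{\<omega>\<in>space M. s\<^sup>2 \<le> Min ((\<lambda>j. (1/4 - \<theta> j \<omega>)\<^sup>2) ` J)}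
      = {\<omega>\<in>space M. \<forall>j\<in>J. \<theta> j \<omega> \<in> {x. s \<le> \<bar>1/4 - x\<bar>}}"
    using J s abs_le_square_iff[of s] by simp
  also have "prob \<dots> \<le> quarter_tail s ^ card J"
  proof (rule prob_all_in_le_power[OF ind J(1)])
    show "{x. s \<le> \<bar>1/4 - x\<bar>} \<in> sets borel" by measurable
    fix j assume "j \<in> J"
    have "prob (\<theta> j -` {x. s \<le> \<bar>1/4 - x\<bar>} \<inter> space M) \<le> max 0 (1/4 - s) + max 0 (1 - 1/4 - s)"
      by (rule prob_uniform_far_from_le[OF uniform[OF \<open>j \<in> J\<close>] s])
    also have "\<dots> \<le> quarter_tail s"
      by (simp add: quarter_tail_def)
    finally show "prob (\<theta> j -` {x. s \<le> \<bar>1/4 - x\<bar>} \<inter> space M) \<le> quarter_tail s" .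
  qed
  finally show ?thesis .
qed

lemma has_integral_two_mult_one_minus_two_mult_power:
  "((\<lambda>s::real. 2 * s * (1 - 2 * s) ^ m) has_integral 1 / (2 * (real m + 1) * (real m + 2))) {0..1/2}"
proof -
  define H where "H s = - ((1 - 2 * s) ^ (m + 1)) / (2 * (real m + 1)) + (1 - 2 * s) ^ (m + 2) / (2 * (real m + 2))"
    for s :: real
  have "(H has_real_derivative 2 * s * (1 - 2 * s) ^ m) (at s)" for s
  proof -
    have "(H has_real_derivative
        - (real (m + 1) * (1 - 2 * s) ^ m * (0 - 2)) / (2 * (real m + 1))
        + real (m + 2) * (1 - 2 * s) ^ (m + 1) * (0 - 2) / (2 * (real m + 2))) (at s)"
      unfolding H_def by (intro derivative_eq_intros) (auto simp: mult_ac)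
    also have "- (real (m + 1) * (1 - 2 * s) ^ m * (0 - 2)) / (2 * (real m + 1))
        + real (m + 2) * (1 - 2 * s) ^ (m + 1) * (0 - 2) / (2 * (real m + 2)) = 2 * s * (1 - 2 * s) ^ m"
    proof -
      have "- (real (m + 1) * (1 - 2 * s) ^ m * (0 - 2)) / (2 * (real m + 1)) = (1 - 2 * s) ^ m"
        "real (m + 2) * ((1 - 2 * s) * (1 - 2 * s) ^ m) * (0 - 2) / (2 * (real m + 2))
          = - ((1 - 2 * s) * (1 - 2 * s) ^ m)"
        by (simp_all add: field_simps)
      then show ?thesis by (simp add: algebra_simps)
    qed
    finally show ?thesis .
  qed
  then have "((\<lambda>s. 2 * s * (1 - 2 * s) ^ m) has_integral H (1/2) - H 0) {0..1/2}"
    by (intro fundamental_theorem_of_calculus)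
       (auto intro: has_real_derivative_iff_has_vector_derivative[THEN iffD1] DERIV_subset)
  moreover have "H (1/2) - H 0 = 1 / (2 * (real m + 1)) - 1 / (2 * (real m + 2))"
    by (simp add: H_def)
  moreover have "\<dots> = 1 / (2 * (real m + 1) * (real m + 2))"
    using of_nat_0_le_iff[of m] by (simp add: divide_simps)
  ultimately show ?thesis by simp
qed

lemma nn_integral_quarter_tail_power_le:
  assumes "m \<ge> 1"
  shows "(\<integral>\<^sup>+s\<in>{0..}. ennreal (2 * s * quarter_tail s ^ m) \<partial>lborel)
    \<le> ennreal (1 / (2 * (real m + 1) * (real m + 2)) + (1/2) ^ m / 2)"
proof -
  define G where "G s = (if s \<in> {0..1/2} then 2 * s * (1 - 2 * s) ^ m else 0)
    + (if s \<in> {1/4..3/4} then 2 * s * (1/2) ^ m else 0)" for s :: real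
  have G_integral: "(G has_integral 1 / (2 * (real m + 1) * (real m + 2)) + (1/2) ^ m / 2) UNIV"
  proof -
    have "((\<lambda>s. 2 * s * (1/2) ^ m) has_integral ((3/4)\<^sup>2 - (1/4)\<^sup>2) * (1/2) ^ m) {1/4..3/4::real}"
      using has_integral_mult_left[OF has_integral_two_mult_id[of "1/4" "3/4"]] by simp
    then show ?thesis
      unfolding G_def
      by (intro has_integral_add has_integral_restrict_UNIV[THEN iffD2]
          has_integral_two_mult_one_minus_two_mult_power) (simp_all add: power2_eq_square)
  qed
  have "(\<integral>\<^sup>+s. ennreal (G s) \<partial>lborel) = ennreal (1 / (2 * (real m + 1) * (real m + 2)) + (1/2) ^ m / 2)"
  proof (rule nn_integral_has_integral_lborel[OF _ _ G_integral])
    show "G \<in> borel_measurable borel"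
      unfolding G_def by measurable
  qed (auto simp: G_def)
  moreover have "ennreal (2 * s * quarter_tail s ^ m) * indicator {0..} s \<le> ennreal (G s)" for s
    using assms by (auto simp: G_def quarter_tail_def indicator_def intro!: ennreal_leI)
  ultimately show ?thesis
    by (metis (no_types, lifting) nn_integral_mono)
qed

lemma (in prob_space) expectation_min_sq_dist_quarter_le:
  assumes ind: "indep_vars (\<lambda>_. borel) \<theta> J" and J: "finite J" "J \<noteq> {}"
    and uniform: "\<And>j. j \<in> J \<Longrightarrow> distributed M lborel (\<theta> j) (indicator {0..1})"
  shows "expectation (\<lambda>\<omega>. Min ((\<lambda>j. (1/4 - \<theta> j \<omega>)\<^sup>2) ` J))
    \<le> 1 / (2 * (real (card J) + 1) * (real (card J) + 2)) + (1/2) ^ card J / 2"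
proof -
  define Y where "Y \<omega> = Min ((\<lambda>j. (1/4 - \<theta> j \<omega>)\<^sup>2) ` J)" for \<omega>
  have Y_measurable: "Y \<in> borel_measurable M"
    unfolding Y_def using uniform[THEN distributed_measurable]
    by (intro borel_measurable_Min J(1)) simp
  have Y_nonneg: "0 \<le> Y \<omega>" for \<omega>
    unfolding Y_def using J by simp
  have "(\<integral>\<^sup>+\<omega>. ennreal (Y \<omega>) \<partial>M)
      = (\<integral>\<^sup>+s\<in>{0..}. ennreal (2 * s) * emeasure M {\<omega>\<in>space M. s\<^sup>2 \<le> Y \<omega>} \<partial>lborel)"
    using prob_space_imp_sigma_finite[OF prob_space_axioms] Y_measurable Y_nonneg
    by (rule nn_integral_eq_nn_integral_sq_tail)
  also have "\<dots> \<le> (\<integral>\<^sup>+s\<in>{0..}. ennreal (2 * s * quarter_tail s ^ card J) \<partial>lborel)"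
  proof (intro nn_integral_mono)
    fix s :: real
    show "ennreal (2 * s) * emeasure M {\<omega>\<in>space M. s\<^sup>2 \<le> Y \<omega>} * indicator {0..} s
      \<le> ennreal (2 * s * quarter_tail s ^ card J) * indicator {0..} s"
    proof (cases "0 \<le> s")
      case True
      have "emeasure M {\<omega>\<in>space M. s\<^sup>2 \<le> Y \<omega>} \<le> ennreal (quarter_tail s ^ card J)"
        using prob_min_sq_dist_quarter_ge_le[OF ind J uniform True]
        by (simp add: Y_def emeasure_eq_measure ennreal_leI)
      then show ?thesis
        using True by (simp add: ennreal_mult quarter_tail_nonneg mult_left_mono)
    qed simp
  qed
  also have "\<dots> \<le> ennreal (1 / (2 * (real (card J) + 1) * (real (card J) + 2)) + (1/2) ^ card J / 2)"
    using J by (intro nn_integral_quarter_tail_power_le) (simp add: Suc_le_eq card_gt_0_iff)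
  finally have "(\<integral>\<^sup>+\<omega>. ennreal (Y \<omega>) \<partial>M)
      \<le> ennreal (1 / (2 * (real (card J) + 1) * (real (card J) + 2)) + (1/2) ^ card J / 2)" .
  then have "enn2real (\<integral>\<^sup>+\<omega>. ennreal (Y \<omega>) \<partial>M)
      \<le> 1 / (2 * (real (card J) + 1) * (real (card J) + 2)) + (1/2) ^ card J / 2"
    by (intro enn2real_leI) simp
  moreover have "expectation Y = enn2real (\<integral>\<^sup>+\<omega>. ennreal (Y \<omega>) \<partial>M)"
    using Y_measurable Y_nonneg by (intro integral_eq_nn_integral) auto
  ultimately show ?thesis
    unfolding Y_def by simp
qed

lemma hundred_mult_le_two_power:
  assumes "m \<ge> 20"
  shows "100 * (m + 1) * (m + 2) \<le> (2::nat) ^ m"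
  using assms
proof (induction m rule: dec_induct)
  case (step n)
  have "100 * (Suc n + 1) * (Suc n + 2) \<le> 2 * (100 * (n + 1) * (n + 2))"
    using step by (simp add: algebra_simps)
  also have "\<dots> \<le> 2 * 2 ^ n"
    using step by simp
  finally show ?case by simp
qed simp

theorem lemma1:
  fixes M :: "'a measure" and \<theta> :: "nat \<Rightarrow> 'a \<Rightarrow> real" and m :: nat
  assumes "prob_space M"
    and "prob_space.indep_vars M (\<lambda>_. borel) \<theta> {1..m}"
    and "\<And>j. j \<in> {1..m} \<Longrightarrow> distributed M lborel (\<theta> j) (indicator {0..1::real})"
    and "m \<ge> 20"
  shows "prob_space.expectation M (\<lambda>\<omega>. Min ((\<lambda>j. (1/4 - \<theta> j \<omega>)^2) ` {1..m}))
           \<le> 1.01 / (2 * (real m + 1) * (real m + 2))"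
proof -
  interpret prob_space M by fact
  let ?D = "2 * (real m + 1) * (real m + 2)"
  have "100 * (real m + 1) * (real m + 2) \<le> 2 ^ m"
    using of_nat_mono[OF hundred_mult_le_two_power[OF assms(4)], where 'a=real]
    by (simp add: algebra_simps)
  then have "(1/2) ^ m / 2 \<le> 0.01 / ?D"
    by (simp add: divide_simps power_one_over) (simp add: algebra_simps)
  moreover have "expectation (\<lambda>\<omega>. Min ((\<lambda>j. (1/4 - \<theta> j \<omega>)^2) ` {1..m})) \<le> 1 / ?D + (1/2) ^ m / 2"
    using expectation_min_sq_dist_quarter_le[OF assms(2) _ _ assms(3)] assms(4) by simp
  moreover have "1 / ?D + 0.01 / ?D = 1.01 / ?D"
    by (simp add: add_divide_distrib[symmetric])
  ultimately show ?thesis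
    by linarith
qed

end
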